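(* Let $J$ be a finite poset on $\{1,\dots,n\}$, $p\in\{1,\dots,n\}$, and let $J_p\subseteq J$ be an inward or outward $p$-anchored path of $J$. Then $J$ and $\delta_{J_p}J$ are strongly Gram $\mathbb Z$-congruent, i.e. there is $B\in GL(n,\mathbb Z)$ with $C_J=B^{tr}C_{\delta_{J_p}J}B$. In particular, $J$ is non-negative of corank $r\ge0$ if and only if $\delta_{J_p}J$ is non-negative of corank $r$.
   Context: For a finite poset $I$ on $\{1,\dots,n\}$: $C_I=[c_{ij}]$ with $c_{ij}=1$ iff $i\preceq_I j$ (else $0$); $G_I=\tfrac12(C_I+C_I^{tr})$; $I$ is non-negative of corank $r$ if $G_I$ is positive semi-definite of rank $n-r$. $\mathcal H(I)$ is the Hasse digraph (arrow $i\to j$ iff $i\prec_I j$ with no element strictly between). $GL(n,\mathbb Z)$ is the set of integer matrices with determinant $\pm1$. A subset $J_p\subseteq J$ with $p\in J_p$ is a $p$-anchored path if: the digraph $\mathcal H(J)$ with vertex $p$ deleted is disconnected, $J_p\setminus\{p\}$ is the vertex set of one of its connected components (so the vertices of $J_p\setminus\{p\}$ are adjacent in $\mathcal H(J)$ only to vertices of $J_p$), the subdigraph of $\mathcal H(J)$ induced on $J_p$ has a path as underlying graph, and $p$ has degree $1$ in it. It is inward (resp. outward) if $p$ is the unique maximal (resp. minimal) element of $J_p$ with the induced order. For such $J_p$, $\delta_{J_p}J$ is the poset on $\{1,\dots,n\}$ whose Hasse digraph is obtained from $\mathcal H(J)$ by reversing all arrows between vertices of $J_p$. *)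

theory Defs
  imports "HOL-Analysis.Analysis"
begin

text \<open>A finite poset on the ground set (a finite type 'n of cardinality n, playing the role
of {1,...,n}) is a relation R with (i,j) in R iff i is below-or-equal j.\<close>

definition is_poset :: "('n::finite \<times> 'n) set \<Rightarrow> bool" where
  "is_poset R \<longleftrightarrow> partial_order_on UNIV R"

definition incid_mat :: "('n::finite \<times> 'n) set \<Rightarrow> int^'n^'n" where
  "incid_mat R = (\<chi> i j. if (i, j) \<in> R then 1 else 0)"

definition gram_mat :: "('n::finite \<times> 'n) set \<Rightarrow> real^'n^'n" where
  "gram_mat R = (\<chi> i j. (real_of_int (incid_mat R $ i $ j) + real_of_int (incid_mat R $ j $ i)) / 2)"

definition psd :: "real^'n^'n \<Rightarrow> bool" where
  "psd G \<longleftrightarrow> (\<forall>x. 0 \<le> x \<bullet> (G *v x))"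

definition nonneg_corank :: "('n::finite \<times> 'n) set \<Rightarrow> nat \<Rightarrow> bool" where
  "nonneg_corank R r \<longleftrightarrow> psd (gram_mat R) \<and> rank (gram_mat R) + r = CARD('n)"

definition hasse :: "('n \<times> 'n) set \<Rightarrow> ('n \<times> 'n) set" where
  "hasse R = {(i, j). (i, j) \<in> R \<and> i \<noteq> j \<and>
      \<not> (\<exists>k. (i, k) \<in> R \<and> (k, j) \<in> R \<and> k \<noteq> i \<and> k \<noteq> j)}"

definition hadj :: "('n \<times> 'n) set \<Rightarrow> 'n \<Rightarrow> 'n \<Rightarrow> bool" where
  "hadj R x y \<longleftrightarrow> (x, y) \<in> hasse R \<or> (y, x) \<in> hasse R"

definition adj_on :: "('n \<times> 'n) set \<Rightarrow> 'n set \<Rightarrow> ('n \<times> 'n) set" where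
  "adj_on R V = {(x, y). x \<in> V \<and> y \<in> V \<and> hadj R x y}"

definition connected_on :: "('n \<times> 'n) set \<Rightarrow> 'n set \<Rightarrow> bool" where
  "connected_on R V \<longleftrightarrow> (\<forall>x\<in>V. \<forall>y\<in>V. (x, y) \<in> (adj_on R V)\<^sup>*)"

definition is_component_on :: "('n \<times> 'n) set \<Rightarrow> 'n set \<Rightarrow> 'n set \<Rightarrow> bool" where
  "is_component_on R V S \<longleftrightarrow> S \<noteq> {} \<and> S \<subseteq> V \<and> connected_on R S \<and>
      (\<forall>x\<in>S. \<forall>y\<in>V. hadj R x y \<longrightarrow> y \<in> S)"

definition is_path_graph_on :: "('n \<times> 'n) set \<Rightarrow> 'n set \<Rightarrow> bool" where
  "is_path_graph_on R V \<longleftrightarrow> (\<exists>vs. distinct vs \<and> set vs = V \<and>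
      (\<forall>x\<in>V. \<forall>y\<in>V. hadj R x y \<longleftrightarrow>
          (\<exists>i. Suc i < length vs \<and> {vs ! i, vs ! Suc i} = {x, y})))"

definition anchored_path :: "('n::finite \<times> 'n) set \<Rightarrow> 'n \<Rightarrow> 'n set \<Rightarrow> bool" where
  "anchored_path R p Jp \<longleftrightarrow> p \<in> Jp \<and>
      \<not> connected_on R (UNIV - {p}) \<and>
      is_component_on R (UNIV - {p}) (Jp - {p}) \<and>
      is_path_graph_on R Jp \<and>
      card {y \<in> Jp. hadj R p y} = 1"

definition is_maximal_in :: "('n \<times> 'n) set \<Rightarrow> 'n set \<Rightarrow> 'n \<Rightarrow> bool" where
  "is_maximal_in R S x \<longleftrightarrow> x \<in> S \<and> \<not> (\<exists>y\<in>S. y \<noteq> x \<and> (x, y) \<in> R)"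

definition is_minimal_in :: "('n \<times> 'n) set \<Rightarrow> 'n set \<Rightarrow> 'n \<Rightarrow> bool" where
  "is_minimal_in R S x \<longleftrightarrow> x \<in> S \<and> \<not> (\<exists>y\<in>S. y \<noteq> x \<and> (y, x) \<in> R)"

definition inward_anchored_path :: "('n::finite \<times> 'n) set \<Rightarrow> 'n \<Rightarrow> 'n set \<Rightarrow> bool" where
  "inward_anchored_path R p Jp \<longleftrightarrow> anchored_path R p Jp \<and>
      is_maximal_in R Jp p \<and> (\<forall>x. is_maximal_in R Jp x \<longrightarrow> x = p)"

definition outward_anchored_path :: "('n::finite \<times> 'n) set \<Rightarrow> 'n \<Rightarrow> 'n set \<Rightarrow> bool" where
  "outward_anchored_path R p Jp \<longleftrightarrow> anchored_path R p Jp \<and>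
      is_minimal_in R Jp p \<and> (\<forall>x. is_minimal_in R Jp x \<longrightarrow> x = p)"

text \<open>delta_{Jp} R: the poset whose Hasse digraph is that of R with all arrows between
vertices of Jp reversed; a finite poset is the reflexive-transitive closure of its
Hasse digraph, so it is given by that closure.\<close>
definition reversed_hasse :: "('n \<times> 'n) set \<Rightarrow> 'n set \<Rightarrow> ('n \<times> 'n) set" where
  "reversed_hasse R Jp =
     {(i, j). (i, j) \<in> hasse R \<and> \<not> (i \<in> Jp \<and> j \<in> Jp)} \<union>
     {(j, i) | i j. (i, j) \<in> hasse R \<and> i \<in> Jp \<and> j \<in> Jp}"

definition delta :: "'n set \<Rightarrow> ('n \<times> 'n) set \<Rightarrow> ('n \<times> 'n) set" where
  "delta Jp R = (reversed_hasse R Jp)\<^sup>*"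

definition strongly_gram_Z_congruent :: "('n::finite \<times> 'n) set \<Rightarrow> ('n \<times> 'n) set \<Rightarrow> bool" where
  "strongly_gram_Z_congruent J K \<longleftrightarrow>
     (\<exists>B :: int^'n^'n. (det B = 1 \<or> det B = -1) \<and>
        incid_mat J = transpose B ** incid_mat K ** B)"

end

theory Submission
  imports Defs
begin

text \<open>
  Let A = Jp - {p}. In the inward case every Hasse arrow of the path points towards p, so A is a
  chain below p which meets the rest of J only through p: nothing outside A lies below an element
  of A, and a \<in> A lies below x \<notin> A iff p does. Reversing the arrows inside Jp therefore
  produces the order flip_over J p A, in which A sits above p with its order reversed. If \<sigma> is
  the order-reversing involution of the chain A, the integer matrix B with columns e_c for c \<notin> A
  and e_p - e_(\<sigma> c) for c \<in> A is an involution with C_J = B^T C_K B, K = delta Jp J.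
  A congruence by a unimodular matrix preserves positive semi-definiteness and rank of the
  symmetrised Gram matrices. The outward case is the inward case of the opposite poset.
\<close>

definition of_int_mat :: "int^'n^'m \<Rightarrow> real^'n^'m" where
  "of_int_mat B = (\<chi> i j. real_of_int (B $ i $ j))"

lemma of_int_mat_mult: "of_int_mat (A ** B) = of_int_mat A ** of_int_mat B"
  by (simp add: of_int_mat_def matrix_matrix_mult_def vec_eq_iff)

lemma of_int_mat_transpose: "of_int_mat (transpose A) = transpose (of_int_mat A)"
  by (simp add: of_int_mat_def transpose_def vec_eq_iff)

lemma det_of_int_mat: "det (of_int_mat B) = real_of_int (det B)"
  by (simp add: det_def of_int_mat_def)

lemma psd_congruent:
  fixes H P :: "real^'n^'n"
  assumes "psd H"
  shows "psd (transpose P ** H ** P)"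
  unfolding psd_def
proof
  fix x :: "real^'n"
  have "x \<bullet> ((transpose P ** H ** P) *v x) = x \<bullet> ((H *v (P *v x)) v* P)"
    by (simp add: matrix_vector_mul_assoc[symmetric])
  also have "\<dots> = (P *v x) \<bullet> (H *v (P *v x))"
    by (metis dot_lmul_matrix inner_commute)
  finally show "0 \<le> x \<bullet> ((transpose P ** H ** P) *v x)" using assms unfolding psd_def by simp
qed

lemma rank_congruent_le: "rank (transpose P ** H ** P) \<le> rank (H::real^'n^'n)"
  by (meson order_trans rank_mul_le_left rank_mul_le_right)

lemma congruent_right_inverse:
  fixes H P Q :: "'a::comm_semiring_1^'n^'n"
  assumes "P ** Q = mat 1"
  shows "transpose Q ** (transpose P ** H ** P) ** Q = H"
proof -
  have "transpose Q ** (transpose P ** H ** P) ** Q = transpose (P ** Q) ** H ** (P ** Q)"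
    by (simp add: matrix_mul_assoc matrix_transpose_mul)
  then show ?thesis using assms by simp
qed

lemma congruent_entry:
  "(transpose P ** M ** P) $ i $ j = (\<Sum>k\<in>UNIV. \<Sum>l\<in>UNIV. P$k$i * M$k$l * P$l$j)"
  for P M :: "'a::comm_semiring_1^'n::finite^'n"
  by (simp add: matrix_matrix_mult_def transpose_def sum_distrib_left sum_distrib_right ac_simps,
      subst sum.swap, simp add: ac_simps)

lemma congruent_symmetrization:
  fixes P M :: "real^'n::finite^'n"
  shows "transpose P ** (\<chi> i j. (M$i$j + M$j$i) / 2) ** P
    = (\<chi> i j. ((transpose P ** M ** P)$i$j + (transpose P ** M ** P)$j$i) / 2)"
proof -
  have "(transpose P ** (\<chi> i j. (M$i$j + M$j$i) / 2) ** P) $ i $ j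
      = ((\<Sum>k\<in>UNIV. \<Sum>l\<in>UNIV. P$k$i * M$k$l * P$l$j) + (\<Sum>k\<in>UNIV. \<Sum>l\<in>UNIV. P$k$i * M$l$k * P$l$j)) / 2"
    for i j
    by (simp add: congruent_entry sum_divide_distrib sum.distrib[symmetric] field_simps)
  moreover have "(\<Sum>k\<in>UNIV. \<Sum>l\<in>UNIV. P$k$i * M$l$k * P$l$j) = (transpose P ** M ** P) $ j $ i" for i j
    unfolding congruent_entry by (subst sum.swap) (simp add: ac_simps)
  ultimately show ?thesis
    by (simp add: vec_eq_iff congruent_entry)
qed

lemma gram_mat_congruent:
  fixes J K :: "('n::finite \<times> 'n) set" and B :: "int^'n^'n"
  assumes "incid_mat J = transpose B ** incid_mat K ** B"
  shows "gram_mat J = transpose (of_int_mat B) ** gram_mat K ** of_int_mat B"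
proof -
  have gram: "gram_mat R = (\<chi> i j. (of_int_mat (incid_mat R) $ i $ j + of_int_mat (incid_mat R) $ j $ i) / 2)"
    for R :: "('n::finite \<times> 'n) set"
    by (simp add: gram_mat_def of_int_mat_def)
  have "of_int_mat (incid_mat J) = transpose (of_int_mat B) ** of_int_mat (incid_mat K) ** of_int_mat B"
    using assms by (simp add: of_int_mat_mult of_int_mat_transpose)
  then show ?thesis
    unfolding gram congruent_symmetrization by simp
qed

lemma strongly_gram_Z_congruent_nonneg_corank_iff:
  assumes "strongly_gram_Z_congruent J K"
  shows "nonneg_corank J r \<longleftrightarrow> nonneg_corank K r"
proof -
  obtain B where det: "det B = 1 \<or> det B = -1" and C: "incid_mat J = transpose B ** incid_mat K ** B"
    using assms unfolding strongly_gram_Z_congruent_def by blast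
  define P where "P = of_int_mat B"
  have G: "gram_mat J = transpose P ** gram_mat K ** P"
    unfolding P_def by (rule gram_mat_congruent[OF C])
  have "invertible P"
    using det by (auto simp: P_def invertible_det_nz det_of_int_mat)
  then obtain Q where "P ** Q = mat 1"
    unfolding invertible_def by blast
  then have G': "gram_mat K = transpose Q ** gram_mat J ** Q"
    unfolding G by (rule congruent_right_inverse[symmetric])
  have "psd (gram_mat J) \<longleftrightarrow> psd (gram_mat K)"
    using G G' psd_congruent by metis
  moreover have "rank (gram_mat J) = rank (gram_mat K)"
    using G G' rank_congruent_le by (metis antisym)
  ultimately show ?thesis unfolding nonneg_corank_def by simp
qed

definition flip_mat :: "'n \<Rightarrow> 'n set \<Rightarrow> ('n \<Rightarrow> 'n) \<Rightarrow> 'a::comm_ring_1^'n^'n" where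
  "flip_mat p A \<sigma> = (\<chi> r c. if c \<in> A then of_bool (r = p) - of_bool (r = \<sigma> c) else of_bool (r = c))"

lemma mult_flip_mat:
  "((M::'a::comm_ring_1^'n::finite^'m) ** flip_mat p A \<sigma>) $ r $ c
     = (if c \<in> A then M $ r $ p - M $ r $ \<sigma> c else M $ r $ c)"
  by (simp add: flip_mat_def matrix_matrix_mult_def of_bool_def right_diff_distrib sum_subtractf
      if_distrib[of "\<lambda>x. _ * x"] cong: if_cong)

lemma transpose_flip_mat_mult:
  "(transpose (flip_mat p A \<sigma>) ** (M::'a::comm_ring_1^'m^'n::finite)) $ r $ c
     = (if r \<in> A then M $ p $ c - M $ \<sigma> r $ c else M $ r $ c)"
  by (simp add: flip_mat_def transpose_def matrix_matrix_mult_def of_bool_def left_diff_distrib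
      sum_subtractf if_distrib[of "\<lambda>x. x * _"] cong: if_cong)

lemma flip_mat_involutive:
  assumes "p \<notin> A" and "\<And>a. a \<in> A \<Longrightarrow> \<sigma> a \<in> A \<and> \<sigma> (\<sigma> a) = a"
  shows "flip_mat p A \<sigma> ** flip_mat p A \<sigma> = (mat 1 :: 'a::comm_ring_1^'n::finite^'n)"
  unfolding vec_eq_iff mult_flip_mat using assms by (auto simp: flip_mat_def mat_def)

definition flip_over :: "('n \<times> 'n) set \<Rightarrow> 'n \<Rightarrow> 'n set \<Rightarrow> ('n \<times> 'n) set" where
  "flip_over J p A =
     {(x, y). x \<notin> A \<and> y \<notin> A \<and> (x, y) \<in> J} \<union>
     {(x, a). x \<notin> A \<and> a \<in> A \<and> (x, p) \<in> J} \<union>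
     {(a, c). a \<in> A \<and> c \<in> A \<and> (c, a) \<in> J}"

lemma incid_mat_flip_over:
  fixes J :: "('n::finite \<times> 'n) set"
  assumes "(p, p) \<in> J" "p \<notin> A"
    and "\<And>x a. x \<notin> A \<Longrightarrow> a \<in> A \<Longrightarrow> (x, a) \<notin> J"
    and "\<And>x a. x \<notin> A \<Longrightarrow> a \<in> A \<Longrightarrow> (a, x) \<in> J \<longleftrightarrow> (p, x) \<in> J"
    and "\<And>a. a \<in> A \<Longrightarrow> \<sigma> a \<in> A"
    and "\<And>a c. a \<in> A \<Longrightarrow> c \<in> A \<Longrightarrow> (\<sigma> c, \<sigma> a) \<in> J \<longleftrightarrow> (a, c) \<in> J"
  shows "incid_mat J = transpose (flip_mat p A \<sigma>) ** incid_mat (flip_over J p A) ** flip_mat p A \<sigma>"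
  using assms
  by (auto simp: vec_eq_iff mult_flip_mat transpose_flip_mat_mult incid_mat_def flip_over_def)

lemma det_eq_1_or_minus_1_if_involutive:
  assumes "(B :: 'a::idom^'n::finite^'n) ** B = mat 1"
  shows "det B = 1 \<or> det B = -1"
proof -
  have "det B * det B = 1"
    using det_mul[of B B] assms by simp
  then show ?thesis
    by (simp add: square_eq_1_iff)
qed

locale finite_poset =
  fixes J :: "('n::finite \<times> 'n) set"
  assumes partial_order: "partial_order_on UNIV J"
begin

lemma refl: "(x, x) \<in> J"
  using partial_order by (auto simp: partial_order_on_def preorder_on_def refl_on_def)

lemma trans: "(x, y) \<in> J \<Longrightarrow> (y, z) \<in> J \<Longrightarrow> (x, z) \<in> J"
  using partial_order unfolding partial_order_on_def preorder_on_def trans_def by blast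

lemma antisym: "(x, y) \<in> J \<Longrightarrow> (y, x) \<in> J \<Longrightarrow> x = y"
  using partial_order unfolding partial_order_on_def antisym_def by blast

lemma hasse_subset: "hasse J \<subseteq> J"
  by (auto simp: hasse_def)

lemma hasse_rtrancl_eq: "(hasse J)\<^sup>* = J"
proof
  have "J\<^sup>* = J"
    using partial_order by (auto simp: rtrancl_trancl_reflcl partial_order_on_def preorder_on_def refl_on_def)
  then show "(hasse J)\<^sup>* \<subseteq> J"
    using rtrancl_mono[OF hasse_subset] by blast
  define interval where "interval x y = {z. (x, z) \<in> J \<and> (z, y) \<in> J}" for x y
  have "(x, y) \<in> (hasse J)\<^sup>*" if "(x, y) \<in> J" for x y
    using that
  proof (induction "card (interval x y)" arbitrary: x y rule: less_induct)
    case less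
    show ?case
    proof (cases "x = y \<or> (x, y) \<in> hasse J")
      case False
      then obtain k where k: "(x, k) \<in> J" "(k, y) \<in> J" "k \<noteq> x" "k \<noteq> y"
        using less.prems by (auto simp: hasse_def)
      have "interval x k \<subset> interval x y" "interval k y \<subset> interval x y"
        unfolding interval_def using k less.prems refl trans antisym by blast+
      then have "(x, k) \<in> (hasse J)\<^sup>*" "(k, y) \<in> (hasse J)\<^sup>*"
        using less.hyps k psubset_card_mono[OF finite] by blast+
      then show ?thesis by simp
    qed auto
  qed
  then show "J \<subseteq> (hasse J)\<^sup>*" by auto
qed

lemma upper_cover:
  assumes "(x, y) \<in> J" "x \<noteq> y"
  shows "\<exists>c. (x, c) \<in> hasse J"
proof -
  have "(x, y) \<in> (hasse J)\<^sup>*"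
    using assms(1) by (simp add: hasse_rtrancl_eq)
  then show ?thesis
    using assms(2) by (cases rule: converse_rtranclE) auto
qed

end

locale pendant_below = finite_poset J for J :: "('n::finite \<times> 'n) set" +
  fixes p :: 'n and A :: "'n set"
  assumes p_notin: "p \<notin> A"
    and pendant: "\<And>a y. a \<in> A \<Longrightarrow> hadj J a y \<Longrightarrow> y \<in> insert p A"
    and below: "\<And>a. a \<in> A \<Longrightarrow> (a, p) \<in> J"
begin

lemma hasse_pendant_neighbour:
  "a \<in> A \<Longrightarrow> (a, y) \<in> hasse J \<or> (y, a) \<in> hasse J \<Longrightarrow> y \<in> insert p A"
  using pendant by (auto simp: hadj_def)

lemma hasse_rtrancl_outside:
  assumes "(x, y) \<in> (hasse J)\<^sup>*" "x \<notin> A"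
  shows "y \<notin> A"
  using assms
proof (induction rule: rtrancl_induct)
  case (step y z)
  show ?case
  proof
    assume "z \<in> A"
    then have "y = p"
      using step hasse_pendant_neighbour by blast
    moreover have "(y, z) \<in> J"
      using step.hyps(2) hasse_subset by blast
    ultimately show False
      using \<open>z \<in> A\<close> below antisym p_notin by metis
  qed
qed

lemma not_le_pendant: "x \<notin> A \<Longrightarrow> a \<in> A \<Longrightarrow> (x, a) \<notin> J"
  using hasse_rtrancl_outside hasse_rtrancl_eq by blast

lemma hasse_rtrancl_from_pendant:
  assumes "(a, y) \<in> (hasse J)\<^sup>*" "a \<in> A"
  shows "y \<in> A \<or> (p, y) \<in> J"
  using assms
proof (induction rule: rtrancl_induct)
  case (step y z)
  show ?case
  proof (cases "y \<in> A")
    case True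
    then show ?thesis using step.hyps(2) hasse_pendant_neighbour refl by blast
  next
    case False
    then show ?thesis using step hasse_subset trans by blast
  qed
qed simp

lemma pendant_le_iff: "x \<notin> A \<Longrightarrow> a \<in> A \<Longrightarrow> (a, x) \<in> J \<longleftrightarrow> (p, x) \<in> J"
  using hasse_rtrancl_from_pendant hasse_rtrancl_eq below trans by blast

lemma reversed_hasse_subset_flip_over: "reversed_hasse J (insert p A) \<subseteq> flip_over J p A"
proof (rule subrelI)
  fix x y assume "(x, y) \<in> reversed_hasse J (insert p A)"
  then consider "(x, y) \<in> hasse J" "x \<notin> insert p A \<or> y \<notin> insert p A"
    | "(y, x) \<in> hasse J" "x \<in> insert p A" "y \<in> insert p A"
    unfolding reversed_hasse_def by blast
  then show "(x, y) \<in> flip_over J p A"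
  proof cases
    case 1
    then show ?thesis using hasse_pendant_neighbour hasse_subset by (auto simp: flip_over_def)
  next
    case 2
    then have "(y, x) \<in> J" "x \<noteq> y" by (auto simp: hasse_def)
    then show ?thesis using 2 below antisym p_notin refl by (auto simp: flip_over_def)
  qed
qed

lemma flip_over_trans: "(x, y) \<in> flip_over J p A \<Longrightarrow> (y, z) \<in> flip_over J p A \<Longrightarrow> (x, z) \<in> flip_over J p A"
  unfolding flip_over_def using trans by blast

lemma delta_subset_flip_over: "delta (insert p A) J \<subseteq> flip_over J p A"
proof (rule subrelI)
  fix x y assume "(x, y) \<in> delta (insert p A) J"
  then show "(x, y) \<in> flip_over J p A"
    unfolding delta_def
  proof (induction rule: rtrancl_induct)
    case base
    then show ?case using refl by (auto simp: flip_over_def)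
  next
    case (step y z)
    then show ?case using reversed_hasse_subset_flip_over flip_over_trans by blast
  qed
qed

lemma hasse_rtrancl_outside_in_delta:
  assumes "(x, y) \<in> (hasse J)\<^sup>*" "x \<notin> A"
  shows "(x, y) \<in> delta (insert p A) J"
  using assms
proof (induction rule: rtrancl_induct)
  case base
  then show ?case by (simp add: delta_def)
next
  case (step y z)
  have "y \<notin> A" "z \<notin> A"
    using step.hyps step.prems hasse_rtrancl_outside by (meson rtrancl.rtrancl_into_rtrancl)+
  moreover have "y \<noteq> z"
    using step.hyps(2) by (simp add: hasse_def)
  ultimately have "(y, z) \<in> reversed_hasse J (insert p A)"
    using step.hyps(2) by (auto simp: reversed_hasse_def)
  then show ?case
    using step.IH step.prems by (simp add: delta_def)
qed

lemma hasse_rtrancl_from_pendant_in_delta: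
  assumes "(a, y) \<in> (hasse J)\<^sup>*" "a \<in> A" "y \<in> insert p A"
  shows "(y, a) \<in> delta (insert p A) J"
  using assms
proof (induction rule: rtrancl_induct)
  case base
  then show ?case by (simp add: delta_def)
next
  case (step y z)
  have "y \<in> insert p A"
  proof (cases "z \<in> A")
    case True
    then show ?thesis using step.hyps(2) hasse_pendant_neighbour by blast
  next
    case False
    then have "(y, p) \<in> J" "y \<noteq> p"
      using step.hyps(2) step.prems(2) by (auto simp: hasse_def)
    then show ?thesis
      using hasse_rtrancl_from_pendant[OF step.hyps(1) step.prems(1)] antisym by blast
  qed
  moreover have "(z, y) \<in> reversed_hasse J (insert p A)"
    using step.hyps(2) step.prems(2) \<open>y \<in> insert p A\<close> by (auto simp: reversed_hasse_def)
  ultimately show ?case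
    using step.IH step.prems(1) by (simp add: delta_def rtrancl.rtrancl_into_rtrancl converse_rtrancl_into_rtrancl)
qed

lemma delta_eq_flip_over: "delta (insert p A) J = flip_over J p A"
proof
  show "flip_over J p A \<subseteq> delta (insert p A) J"
  proof (rule subrelI)
    fix x y assume "(x, y) \<in> flip_over J p A"
    then consider "x \<notin> A" "(x, y) \<in> J" | "x \<notin> A" "y \<in> A" "(x, p) \<in> J" | "x \<in> A" "y \<in> A" "(y, x) \<in> J"
      unfolding flip_over_def by blast
    then show "(x, y) \<in> delta (insert p A) J"
    proof cases
      case 1
      then show ?thesis using hasse_rtrancl_outside_in_delta hasse_rtrancl_eq by blast
    next
      case 2
      then have "(x, p) \<in> delta (insert p A) J" "(p, y) \<in> delta (insert p A) J"
        using hasse_rtrancl_outside_in_delta hasse_rtrancl_from_pendant_in_delta hasse_rtrancl_eq below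
        by blast+
      then show ?thesis by (simp add: delta_def)
    next
      case 3
      then show ?thesis using hasse_rtrancl_from_pendant_in_delta hasse_rtrancl_eq by blast
    qed
  qed
qed (rule delta_subset_flip_over)

lemma strongly_gram_Z_congruent_delta:
  assumes involution: "\<And>a. a \<in> A \<Longrightarrow> \<sigma> a \<in> A \<and> \<sigma> (\<sigma> a) = a"
    and antitone: "\<And>a c. a \<in> A \<Longrightarrow> c \<in> A \<Longrightarrow> (\<sigma> c, \<sigma> a) \<in> J \<longleftrightarrow> (a, c) \<in> J"
  shows "strongly_gram_Z_congruent J (delta (insert p A) J)"
proof -
  let ?B = "flip_mat p A \<sigma> :: int^'n^'n"
  have "det ?B = 1 \<or> det ?B = -1"
    by (rule det_eq_1_or_minus_1_if_involutive, rule flip_mat_involutive[OF p_notin involution])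
  moreover have "incid_mat J = transpose ?B ** incid_mat (flip_over J p A) ** ?B"
    using incid_mat_flip_over[OF refl p_notin not_le_pendant pendant_le_iff _ antitone] involution
    by blast
  ultimately show ?thesis
    unfolding delta_eq_flip_over strongly_gram_Z_congruent_def by blast
qed

end

definition list_adjacent :: "'a list \<Rightarrow> 'a \<Rightarrow> 'a \<Rightarrow> bool" where
  "list_adjacent vs x y \<longleftrightarrow> (\<exists>i. Suc i < length vs \<and> {vs ! i, vs ! Suc i} = {x, y})"

lemma list_adjacent_rev_imp: "list_adjacent vs x y \<Longrightarrow> list_adjacent (rev vs) x y"
proof -
  assume "list_adjacent vs x y"
  then obtain i where i: "Suc i < length vs" "{vs ! i, vs ! Suc i} = {x, y}"
    unfolding list_adjacent_def by blast
  define k where "k = length vs - Suc (Suc i)"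
  have "rev vs ! k = vs ! Suc i" "rev vs ! Suc k = vs ! i"
    using i(1) by (simp_all add: k_def rev_nth Suc_diff_Suc)
  then show "list_adjacent (rev vs) x y"
    unfolding list_adjacent_def using i by (intro exI[of _ k]) (auto simp: k_def)
qed

lemma list_adjacent_rev [simp]: "list_adjacent (rev vs) = list_adjacent vs"
  using list_adjacent_rev_imp[of vs] list_adjacent_rev_imp[of "rev vs"] by (auto simp: fun_eq_iff)

lemma list_adjacent_nth_Suc:
  assumes "distinct vs" "Suc i < length vs" "list_adjacent vs (vs ! Suc i) y"
  shows "y = vs ! i \<or> (Suc (Suc i) < length vs \<and> y = vs ! Suc (Suc i))"
proof -
  obtain m where m: "Suc m < length vs" "{vs ! m, vs ! Suc m} = {vs ! Suc i, y}"
    using assms(3) unfolding list_adjacent_def by blast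
  have inj: "k < length vs \<Longrightarrow> vs ! k = vs ! Suc i \<longleftrightarrow> k = Suc i" for k
    using assms(1,2) by (simp add: nth_eq_iff_index_eq)
  show ?thesis
  proof (cases "vs ! m = vs ! Suc i")
    case True
    then show ?thesis using m inj[of m] by (auto simp: doubleton_eq_iff)
  next
    case False
    then show ?thesis using m inj[of "Suc m"] by (auto simp: doubleton_eq_iff)
  qed
qed

lemma path_graph_from_end:
  assumes "is_path_graph_on R V" "p \<in> V" "card {y \<in> V. hadj R p y} = 1"
  obtains vs where "distinct vs" "set vs = V" "hd vs = p"
    "\<And>x y. x \<in> V \<Longrightarrow> y \<in> V \<Longrightarrow> hadj R x y \<longleftrightarrow> list_adjacent vs x y"
proof -
  obtain vs where vs: "distinct vs" "set vs = V"
    and "\<forall>x\<in>V. \<forall>y\<in>V. hadj R x y \<longleftrightarrow> (\<exists>i. Suc i < length vs \<and> {vs ! i, vs ! Suc i} = {x, y})"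
    using assms(1) unfolding is_path_graph_on_def by (elim exE conjE) (rule that)
  then have adj: "\<And>x y. x \<in> V \<Longrightarrow> y \<in> V \<Longrightarrow> hadj R x y \<longleftrightarrow> list_adjacent vs x y"
    by (simp add: list_adjacent_def)
  obtain m where m: "m < length vs" "vs ! m = p"
    using assms(2) vs(2) by (auto simp: in_set_conv_nth)
  consider "m = 0" | "Suc m = length vs" | "0 < m" "Suc m < length vs"
    using m(1) by linarith
  then show ?thesis
  proof cases
    case 1
    then show ?thesis using that vs adj m by (simp add: hd_conv_nth)
  next
    case 2
    then have "hd (rev vs) = p" using m by (metis diff_Suc_1 hd_rev last_conv_nth list.size(3) nat.distinct(1))
    then show ?thesis using that[of "rev vs"] vs adj by simp
  next
    case 3
    have "list_adjacent vs p (vs ! (m - 1))"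
      unfolding list_adjacent_def using 3 m by (intro exI[of _ "m - 1"]) (simp add: insert_commute)
    moreover have "list_adjacent vs p (vs ! Suc m)"
      unfolding list_adjacent_def using 3 m by (intro exI[of _ m]) simp
    moreover have "vs ! (m - 1) \<in> V" "vs ! Suc m \<in> V"
      using 3 vs(2) by auto
    ultimately have "{vs ! (m - 1), vs ! Suc m} \<subseteq> {y \<in> V. hadj R p y}"
      using adj[OF assms(2)] by blast
    then have "card {vs ! (m - 1), vs ! Suc m} \<le> 1"
      using assms(3) card_mono[of "{y \<in> V. hadj R p y}"] vs(2) by force
    moreover have "vs ! (m - 1) \<noteq> vs ! Suc m"
      using 3 vs(1) by (simp add: nth_eq_iff_index_eq)
    ultimately show ?thesis by simp
  qed
qed

lemma list_chain_reversal:
  assumes "distinct ws"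
    and "\<And>i j. i < length ws \<Longrightarrow> j < length ws \<Longrightarrow> (ws ! i, ws ! j) \<in> R \<longleftrightarrow> j \<le> i"
  obtains \<sigma> where "\<And>a. a \<in> set ws \<Longrightarrow> \<sigma> a \<in> set ws \<and> \<sigma> (\<sigma> a) = a"
    and "\<And>a c. a \<in> set ws \<Longrightarrow> c \<in> set ws \<Longrightarrow> (\<sigma> c, \<sigma> a) \<in> R \<longleftrightarrow> (a, c) \<in> R"
proof -
  define n where "n = length ws"
  define \<sigma> where "\<sigma> x = ws ! (n - 1 - (THE i. i < n \<and> ws ! i = x))" for x
  have \<sigma>_nth: "\<sigma> (ws ! i) = ws ! (n - 1 - i)" if "i < n" for i
    unfolding \<sigma>_def using that assms(1)
    by (subst the_equality[of _ i]) (auto simp: n_def nth_eq_iff_index_eq)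
  show ?thesis
  proof
    fix a assume "a \<in> set ws"
    then obtain i where "i < n" "a = ws ! i" by (auto simp: n_def in_set_conv_nth)
    then show "\<sigma> a \<in> set ws \<and> \<sigma> (\<sigma> a) = a" by (simp add: \<sigma>_nth n_def)
  next
    fix a c assume "a \<in> set ws" "c \<in> set ws"
    then obtain i j where "i < n" "a = ws ! i" "j < n" "c = ws ! j" by (auto simp: n_def in_set_conv_nth)
    then show "(\<sigma> c, \<sigma> a) \<in> R \<longleftrightarrow> (a, c) \<in> R" by (simp add: \<sigma>_nth assms(2) n_def) arith
  qed
qed

locale inward_path = finite_poset J for J :: "('n::finite \<times> 'n) set" +
  fixes vs :: "'n list"
  assumes distinct: "distinct vs" and nonempty: "vs \<noteq> []"
    and adjacent: "\<And>x y. x \<in> set vs \<Longrightarrow> y \<in> set vs \<Longrightarrow> hadj J x y \<longleftrightarrow> list_adjacent vs x y"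
    and tl_pendant: "\<And>x y. x \<in> set (tl vs) \<Longrightarrow> hadj J x y \<Longrightarrow> y \<in> set vs"
    and unique_maximal: "\<And>x. is_maximal_in J (set vs) x \<Longrightarrow> x = hd vs"
begin

lemma upper_cover_on_path:
  assumes "Suc i < length vs"
  obtains c where "(vs ! Suc i, c) \<in> hasse J" "list_adjacent vs (vs ! Suc i) c"
proof -
  have "vs ! Suc i \<noteq> hd vs"
    using assms distinct nonempty by (simp add: hd_conv_nth nth_eq_iff_index_eq)
  then have "\<not> is_maximal_in J (set vs) (vs ! Suc i)"
    using unique_maximal by blast
  then obtain y where "(vs ! Suc i, y) \<in> J" "vs ! Suc i \<noteq> y"
    unfolding is_maximal_in_def using assms by auto
  then obtain c where c: "(vs ! Suc i, c) \<in> hasse J"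
    using upper_cover by blast
  moreover have "vs ! Suc i \<in> set (tl vs)"
    using assms by (simp add: nth_tl[symmetric])
  ultimately have "c \<in> set vs"
    using tl_pendant by (auto simp: hadj_def)
  then have "list_adjacent vs (vs ! Suc i) c"
    using adjacent[of "vs ! Suc i" c] c assms by (simp add: hadj_def)
  with c show ?thesis
    by (rule that)
qed

text \<open>Descending induction: the upper cover of vs ! Suc i is one of its two path neighbours,
  and by induction vs ! Suc (Suc i) lies below it.\<close>

lemma hasse_descends: "Suc i < length vs \<Longrightarrow> (vs ! Suc i, vs ! i) \<in> hasse J"
proof (induction "length vs - i" arbitrary: i rule: less_induct)
  case less
  obtain c where c: "(vs ! Suc i, c) \<in> hasse J" "list_adjacent vs (vs ! Suc i) c"
    using upper_cover_on_path[OF less.prems] by blast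
  have "c \<noteq> vs ! Suc (Suc i)" if "Suc (Suc i) < length vs"
  proof
    assume "c = vs ! Suc (Suc i)"
    moreover have "(vs ! Suc (Suc i), vs ! Suc i) \<in> hasse J"
      using less.hyps[of "Suc i"] that by simp
    ultimately show False
      using c(1) antisym hasse_subset by (auto simp: hasse_def)
  qed
  then show ?case
    using list_adjacent_nth_Suc[OF distinct less.prems c(2)] c(1) by blast
qed

lemma nth_le_nth: "j \<le> i \<Longrightarrow> i < length vs \<Longrightarrow> (vs ! i, vs ! j) \<in> J"
proof (induction i rule: dec_induct)
  case (step k)
  then have "(vs ! Suc k, vs ! k) \<in> J" "(vs ! k, vs ! j) \<in> J"
    using hasse_descends[of k] hasse_subset by auto
  then show ?case
    by (rule trans)
qed (simp add: refl)

lemma nth_le_nth_iff: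
  assumes "i < length vs" "j < length vs"
  shows "(vs ! i, vs ! j) \<in> J \<longleftrightarrow> j \<le> i"
proof
  assume ij: "(vs ! i, vs ! j) \<in> J"
  show "j \<le> i"
  proof (rule ccontr)
    assume "\<not> j \<le> i"
    then have "(vs ! j, vs ! i) \<in> J"
      using nth_le_nth assms(2) by simp
    then have "vs ! i = vs ! j"
      using ij antisym by blast
    with \<open>\<not> j \<le> i\<close> show False
      using distinct assms by (simp add: nth_eq_iff_index_eq)
  qed
qed (use nth_le_nth assms in simp)

lemma insert_hd_tl: "insert (hd vs) (set (tl vs)) = set vs"
  using nonempty by (cases vs) auto

lemma in_set_tl_iff: "a \<in> set (tl vs) \<longleftrightarrow> (\<exists>i. Suc i < length vs \<and> a = vs ! Suc i)"
  by (cases vs) (auto simp: in_set_conv_nth)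

sublocale pendant_below J "hd vs" "set (tl vs)"
proof
  show "hd vs \<notin> set (tl vs)"
    using distinct list.collapse[OF nonempty] distinct.simps(2) by metis
  show "y \<in> insert (hd vs) (set (tl vs))" if "a \<in> set (tl vs)" "hadj J a y" for a y
    using tl_pendant[OF that] by (simp only: insert_hd_tl)
  show "(a, hd vs) \<in> J" if a: "a \<in> set (tl vs)" for a
  proof -
    obtain i where i: "Suc i < length vs" "a = vs ! Suc i"
      using a unfolding in_set_tl_iff by blast
    have "(vs ! Suc i, vs ! 0) \<in> J"
      using nth_le_nth[of 0 "Suc i"] i(1) by simp
    then show ?thesis
      using i(2) nonempty by (simp add: hd_conv_nth)
  qed
qed

lemma strongly_gram_Z_congruent_delta_path: "strongly_gram_Z_congruent J (delta (set vs) J)"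
proof -
  have tl_order: "(tl vs ! i, tl vs ! j) \<in> J \<longleftrightarrow> j \<le> i"
    if "i < length (tl vs)" "j < length (tl vs)" for i j
    using that nth_le_nth_iff[of "Suc i" "Suc j"] by (simp add: nth_tl)
  obtain \<sigma> where "\<And>a. a \<in> set (tl vs) \<Longrightarrow> \<sigma> a \<in> set (tl vs) \<and> \<sigma> (\<sigma> a) = a"
    "\<And>a c. a \<in> set (tl vs) \<Longrightarrow> c \<in> set (tl vs) \<Longrightarrow> (\<sigma> c, \<sigma> a) \<in> J \<longleftrightarrow> (a, c) \<in> J"
    using list_chain_reversal[OF distinct_tl[OF distinct] tl_order] by blast
  then have "strongly_gram_Z_congruent J (delta (insert (hd vs) (set (tl vs))) J)"
    by (rule strongly_gram_Z_congruent_delta)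
  then show ?thesis
    by (simp only: insert_hd_tl)
qed

end

lemma strongly_gram_Z_congruent_delta_inward:
  assumes "is_poset J" "inward_anchored_path J p Jp"
  shows "strongly_gram_Z_congruent J (delta Jp J)"
proof -
  have "anchored_path J p Jp" and maximal: "\<And>x. is_maximal_in J Jp x \<Longrightarrow> x = p"
    using assms(2) unfolding inward_anchored_path_def by blast+
  then have "p \<in> Jp" and path: "is_path_graph_on J Jp" and degree: "card {y \<in> Jp. hadj J p y} = 1"
    and component: "is_component_on J (UNIV - {p}) (Jp - {p})"
    unfolding anchored_path_def by blast+
  obtain vs where vs: "distinct vs" "set vs = Jp" "hd vs = p"
    and adjacent: "\<And>x y. x \<in> Jp \<Longrightarrow> y \<in> Jp \<Longrightarrow> hadj J x y \<longleftrightarrow> list_adjacent vs x y"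
    using path_graph_from_end[OF path \<open>p \<in> Jp\<close> degree] by blast
  have "vs \<noteq> []"
    using vs(2) \<open>p \<in> Jp\<close> by auto
  then have tl_vs: "set (tl vs) = Jp - {p}"
    using vs by (cases vs) auto
  interpret inward_path J vs
  proof
    show "partial_order_on UNIV J"
      using assms(1) by (simp add: is_poset_def)
    show "hadj J x y \<longleftrightarrow> list_adjacent vs x y" if "x \<in> set vs" "y \<in> set vs" for x y
      using adjacent that vs(2) by simp
    show "y \<in> set vs" if "x \<in> set (tl vs)" "hadj J x y" for x y
      using component that \<open>p \<in> Jp\<close> unfolding is_component_on_def tl_vs vs(2) by blast
    show "x = hd vs" if "is_maximal_in J (set vs) x" for x
      using maximal that vs by simp
  qed fact+
  show ?thesis
    using strongly_gram_Z_congruent_delta_path vs(2) by simp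
qed

lemma hasse_converse: "hasse (R\<inverse>) = (hasse R)\<inverse>"
  by (auto simp: hasse_def)

lemma hadj_converse: "hadj (R\<inverse>) = hadj R"
  by (auto simp: hadj_def hasse_converse fun_eq_iff)

lemma anchored_path_converse: "anchored_path (R\<inverse>) p Jp \<longleftrightarrow> anchored_path R p Jp"
  by (simp add: anchored_path_def is_component_on_def connected_on_def adj_on_def
      is_path_graph_on_def hadj_converse)

lemma inward_anchored_path_converse:
  "inward_anchored_path (R\<inverse>) p Jp \<longleftrightarrow> outward_anchored_path R p Jp"
  by (simp add: inward_anchored_path_def outward_anchored_path_def anchored_path_converse
      is_maximal_in_def is_minimal_in_def)

lemma delta_converse: "delta Jp (R\<inverse>) = (delta Jp R)\<inverse>"
proof -
  have "reversed_hasse (R\<inverse>) Jp = (reversed_hasse R Jp)\<inverse>"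
    by (auto simp: reversed_hasse_def hasse_converse)
  then show ?thesis
    by (simp add: delta_def rtrancl_converse)
qed

lemma incid_mat_converse: "incid_mat (R\<inverse>) = transpose (incid_mat R)"
  by (simp add: incid_mat_def transpose_def)

lemma strongly_gram_Z_congruent_converse:
  fixes J K :: "('n::finite \<times> 'n) set"
  assumes "strongly_gram_Z_congruent (J\<inverse>) (K\<inverse>)"
  shows "strongly_gram_Z_congruent J K"
proof -
  obtain B :: "int^'n^'n" where det: "det B = 1 \<or> det B = -1"
    and C: "incid_mat (J\<inverse>) = transpose B ** incid_mat (K\<inverse>) ** B"
    using assms unfolding strongly_gram_Z_congruent_def by blast
  have "incid_mat J = transpose (incid_mat (J\<inverse>))"
    by (simp add: incid_mat_converse)
  also have "\<dots> = transpose B ** transpose (incid_mat (K\<inverse>)) ** B"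
    unfolding C by (simp add: matrix_transpose_mul matrix_mul_assoc)
  also have "\<dots> = transpose B ** incid_mat K ** B"
    by (simp add: incid_mat_converse)
  finally show ?thesis
    using det unfolding strongly_gram_Z_congruent_def by blast
qed

theorem lemma3p3:
  fixes J :: "('n::finite \<times> 'n) set" and p :: 'n and Jp :: "'n set"
  assumes "is_poset J"
    and "inward_anchored_path J p Jp \<or> outward_anchored_path J p Jp"
  shows "strongly_gram_Z_congruent J (delta Jp J) \<and>
         (\<forall>r::nat. nonneg_corank J r \<longleftrightarrow> nonneg_corank (delta Jp J) r)"
proof -
  have "strongly_gram_Z_congruent J (delta Jp J)"
    using assms(2)
  proof
    assume "inward_anchored_path J p Jp"
    with assms(1) show ?thesis
      by (rule strongly_gram_Z_congruent_delta_inward)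
  next
    assume "outward_anchored_path J p Jp"
    then have "inward_anchored_path (J\<inverse>) p Jp"
      by (simp add: inward_anchored_path_converse)
    moreover have "is_poset (J\<inverse>)"
      using assms(1) by (simp add: is_poset_def)
    ultimately have "strongly_gram_Z_congruent (J\<inverse>) ((delta Jp J)\<inverse>)"
      unfolding delta_converse[symmetric] by (intro strongly_gram_Z_congruent_delta_inward)
    then show ?thesis
      by (rule strongly_gram_Z_congruent_converse)
  qed
  then show ?thesis
    by (simp add: strongly_gram_Z_congruent_nonneg_corank_iff)
qed

end
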